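(* Under Assumption A6, let $P^*$ be the constructed probability measure on $(X^*,Y^*(0))$. Then $P^*(X^*\le0)=P(X=0)$ and, for every $y\in\mathbb R$, $$P^*\big(Y^*(0)\le y\mid X^*\le0\big)=P\big(Y\le y\mid X=0\big);$$ that is, the distribution of $Y^*(0)$ given $X^*\le0$ under $P^*$ equals the distribution of $Y$ given $X=0$ under $P$.
   Context: Setting: a probability measure $P$ under which $X\ge0$ is a real random variable with $P(X=0)>0$ having a density $f_X$ on $(0,\infty)$, $Y(0)$ is a real random variable with $E|Y(0)|<\infty$ (the potential outcome at the bunching point $0$), and the observed outcome satisfies $Y=Y(0)$ on $\{X=0\}$. $Q_{Y(0)\mid X=x}(e):=\inf\{y:P(Y(0)\le y\mid X=x)\ge e\}$ and $F_{Y(0)}$ is the CDF of $Y(0)$. Assumption A6: there are functions $s:(0,\infty)\to\mathbb R$ and $\phi:(0,1)\to\mathbb R$ such that (i) $Q_{Y(0)\mid X=x}(e)=s(x)+\phi(e)$ for all $x>0$, $e\in(0,1)$; (ii) $s$ is real analytic on $(0,\infty)$ and extends to a real analytic function $s^*:\mathbb R\to\mathbb R$; (iii) $\phi$ is strictly increasing, and, writing $G(t):=\mathrm{Leb}\{e\in(0,1):\phi(e)\le t\}$ (the generalized inverse $\phi^{-1}$), there is a continuous $h:\mathbb R\to[0,\infty)$ with $h=f_X$ on $(0,\infty)$ such that $\int_{-\infty}^{\infty}G(y-s^*(x))\,h(x)\,dx=F_{Y(0)}(y)$ for all $y\in\mathbb R$. Construction of $P^*$: under $P^*$, $X^*$ has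 CDF $F^*(x)=\int_{-\infty}^x h(t)\,dt$ for $x<0$ and $F^*(x)=P(X\le x)$ for $x\ge0$, and the conditional distribution of $Y^*(0)$ given $X^*=x$ has quantile function $e\mapsto s^*(x)+\phi(e)$, $e\in(0,1)$ (equivalently conditional CDF $y\mapsto G(y-s^*(x))$). *)

theory Defs
  imports "HOL-Probability.Probability"
begin

definition real_analytic_on :: "(real \<Rightarrow> real) \<Rightarrow> real set \<Rightarrow> bool" where
  "real_analytic_on f S \<longleftrightarrow>
     (\<forall>x\<in>S. \<exists>r>0. \<exists>a::nat \<Rightarrow> real.
        \<forall>y. \<bar>y - x\<bar> < r \<longrightarrow> (\<lambda>n. a n * (y - x) ^ n) sums f y)"

definition is_cdf :: "(real \<Rightarrow> real) \<Rightarrow> bool" where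
  "is_cdf F \<longleftrightarrow> mono F \<and> (\<forall>x. continuous (at_right x) F)
     \<and> (F \<longlongrightarrow> 0) at_bot \<and> (F \<longlongrightarrow> 1) at_top"

definition quantile :: "(real \<Rightarrow> real) \<Rightarrow> real \<Rightarrow> real" where
  "quantile F e = Inf {y. e \<le> F y}"

definition genInv :: "(real \<Rightarrow> real) \<Rightarrow> real \<Rightarrow> real" where
  "genInv \<phi> t = measure lborel {e \<in> {0<..<1}. \<phi> e \<le> t}"

end

theory Submission
  imports Defs
begin

text \<open>
  For x > 0, assumption A6 (i) says that the conditional CDF of Y(0) given X = x is
  y \<mapsto> G(y - s(x)). Removing the part x > 0 from the mixture identity A6 (iii) therefore
  leaves: the integral of G(y - s*(x)) h(x) over x \<le> 0 equals P(X = 0, Y(0) \<le> y).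
  Letting y tend to infinity, h has mass P(X = 0) on (-\<infinity>, 0], which is also
  P*(X* \<le> 0) = P(X \<le> 0). So the law of X* restricted to (-\<infinity>, 0] is h(x) dx, and
  integrating the conditional CDF of Y*(0) against it gives
  P*(X* \<le> 0, Y*(0) \<le> y) = P(X = 0, Y \<le> y).
\<close>

lemma sets_genInv_sublevel:
  fixes \<phi> :: "real \<Rightarrow> real"
  assumes "mono_on {0<..<1} \<phi>"
  shows "{e \<in> {0<..<1}. \<phi> e \<le> t} \<in> sets borel"
proof (rule real_interval_borel_measurable)
  show "is_interval {e \<in> {0<..<1}. \<phi> e \<le> t}"
    unfolding is_interval_1
  proof (intro ballI allI impI)
    fix a b x assume "a \<in> {e \<in> {0<..<1}. \<phi> e \<le> t}" "b \<in> {e \<in> {0<..<1}. \<phi> e \<le> t}"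
      and "a \<le> x \<and> x \<le> b"
    then show "x \<in> {e \<in> {0<..<1}. \<phi> e \<le> t}"
      using mono_onD[OF assms, of x b] by auto
  qed
qed

lemma genInv_nonneg: "0 \<le> genInv \<phi> t"
  by (simp add: genInv_def)

lemma emeasure_genInv_sublevel:
  "emeasure lborel {e \<in> {0<..<1::real}. \<phi> e \<le> t} = ennreal (genInv \<phi> t)"
proof -
  have "emeasure lborel {e \<in> {0<..<1::real}. \<phi> e \<le> t} \<le> emeasure lborel {0<..<1::real}"
    by (rule emeasure_mono) auto
  then show ?thesis
    unfolding genInv_def by (intro emeasure_eq_ennreal_measure) (auto simp: top_unique)
qed

lemma genInv_mono:
  assumes "mono_on {0<..<1} \<phi>"
  shows "mono (genInv \<phi>)"
proof
  fix t t' :: real assume "t \<le> t'"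
  have "emeasure lborel {e \<in> {0<..<1::real}. \<phi> e \<le> t}
      \<le> emeasure lborel {e \<in> {0<..<1::real}. \<phi> e \<le> t'}"
    by (rule emeasure_mono) (use \<open>t \<le> t'\<close> sets_genInv_sublevel[OF assms] in auto)
  then show "genInv \<phi> t \<le> genInv \<phi> t'"
    by (simp only: emeasure_genInv_sublevel ennreal_le_iff[OF genInv_nonneg])
qed

lemma SUP_genInv_eq_1:
  assumes "mono_on {0<..<1} \<phi>"
  shows "(SUP n. ennreal (genInv \<phi> (real n - c))) = 1"
proof -
  let ?A = "\<lambda>n::nat. {e \<in> {0<..<1::real}. \<phi> e \<le> real n - c}"
  have "(SUP n. ennreal (genInv \<phi> (real n - c))) = emeasure lborel (\<Union>n. ?A n)"
    unfolding emeasure_genInv_sublevel[symmetric]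
    by (rule SUP_emeasure_incseq) (use sets_genInv_sublevel[OF assms] in \<open>auto simp: incseq_def\<close>)
  also have "(\<Union>n. ?A n) = {0<..<1}"
  proof safe
    fix e :: real assume "e \<in> {0<..<1}"
    obtain n :: nat where "\<phi> e + c \<le> real n" using real_arch_simple by blast
    then show "e \<in> (\<Union>n. ?A n)" using \<open>e \<in> {0<..<1}\<close> by (auto intro!: exI[of _ n])
  qed
  finally show ?thesis by simp
qed

lemma borel_measurable_genInv:
  "mono_on {0<..<1} \<phi> \<Longrightarrow> genInv \<phi> \<in> borel_measurable borel"
  by (rule borel_measurable_mono[OF genInv_mono])

lemma is_cdf_nonneg: "is_cdf F \<Longrightarrow> 0 \<le> F y"
  unfolding is_cdf_def
  by (elim conjE, rule tendsto_upperbound)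
     (auto simp: eventually_at_bot_linorder intro!: exI[of _ y] dest: monoD)

lemma is_cdf_le_1: "is_cdf F \<Longrightarrow> F y \<le> 1"
  unfolding is_cdf_def
  by (elim conjE, rule tendsto_lowerbound)
     (auto simp: eventually_at_top_linorder intro!: exI[of _ y] dest: monoD)

lemma quantile_le_iff:
  assumes F: "is_cdf F" and "0 < e" "e < 1"
  shows "quantile F e \<le> y \<longleftrightarrow> e \<le> F y"
proof -
  from F have mono: "mono F" and right_cont: "\<And>x. continuous (at_right x) F"
    and lim_bot: "(F \<longlongrightarrow> 0) at_bot" and lim_top: "(F \<longlongrightarrow> 1) at_top"
    by (auto simp: is_cdf_def)
  let ?S = "{z. e \<le> F z}"
  obtain z0 where z0: "\<And>z. z \<le> z0 \<Longrightarrow> F z < e"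
    using order_tendstoD(2)[OF lim_bot \<open>0 < e\<close>] by (auto simp: eventually_at_bot_linorder)
  have bdd: "bdd_below ?S"
    by (rule bdd_belowI[of _ z0]) (use z0 in \<open>force simp: not_less[symmetric]\<close>)
  obtain z1 where "\<And>z. z1 \<le> z \<Longrightarrow> e < F z"
    using order_tendstoD(1)[OF lim_top \<open>e < 1\<close>] by (auto simp: eventually_at_top_linorder)
  then have nonempty: "?S \<noteq> {}" by (metis less_imp_le mem_Collect_eq order_refl empty_iff)
  have "e \<le> F (Inf ?S)"
  proof (rule tendsto_lowerbound[OF right_cont[of "Inf ?S", unfolded continuous_within]])
    show "\<forall>\<^sub>F z in at_right (Inf ?S). e \<le> F z"
    proof (rule eventually_mono[OF eventually_at_right_less])
      fix z assume "Inf ?S < z"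
      then obtain w where "w \<in> ?S" "w < z" using cInf_less_iff[OF nonempty bdd] by blast
      then show "e \<le> F z" using monoD[OF mono, of w z] by auto
    qed
  qed simp
  then show ?thesis
    unfolding quantile_def using monoD[OF mono] by (auto intro: cInf_lower[OF _ bdd] order_trans)
qed

lemma cdf_eq_genInv_of_quantile_shift:
  assumes F: "is_cdf F" and quantile: "\<forall>e\<in>{0<..<1}. quantile F e = c + \<phi> e"
  shows "F y = genInv \<phi> (y - c)"
proof -
  have "{e \<in> {0<..<1}. \<phi> e \<le> y - c} = {e \<in> {0<..<1}. e \<le> F y}"
    using quantile quantile_le_iff[OF F] by (force simp: algebra_simps)
  also have "\<dots> = (if F y < 1 then {0<..F y} else {0<..<1})"
    using is_cdf_le_1[OF F, of y] by auto
  finally show ?thesis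
    using is_cdf_nonneg[OF F, of y] is_cdf_le_1[OF F, of y] by (simp add: genInv_def)
qed

lemma real_analytic_on_imp_isCont:
  assumes "real_analytic_on f S" "x \<in> S"
  shows "isCont f x"
proof -
  obtain r a where r: "r > 0"
    and a: "\<And>y. \<bar>y - x\<bar> < r \<Longrightarrow> (\<lambda>n. a n * (y - x) ^ n) sums f y"
    using assms unfolding real_analytic_on_def by blast
  have "summable (\<lambda>n. a n * (r/2) ^ n)"
    using a[of "x + r/2"] r by (simp add: sums_iff)
  then have "isCont (\<lambda>z. \<Sum>n. a n * z ^ n) (x - x)"
    by (rule isCont_powser) (use r in simp)
  then have "isCont (\<lambda>y. \<Sum>n. a n * (y - x) ^ n) x"
    by (rule isCont_o2[rotated]) simp
  then show ?thesis
    by (rule continuous_transform_within[OF _ r])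
       (use a in \<open>auto simp: dist_real_def sums_iff\<close>)
qed

lemma set_nn_integral_atMost_eq_emeasure_by_complement:
  fixes f :: "real \<Rightarrow> ennreal" and X :: "'a \<Rightarrow> real"
  assumes "finite_measure M"
    and [measurable]: "f \<in> borel_measurable borel" "X \<in> borel_measurable M" "Measurable.pred M P"
    and total: "(\<integral>\<^sup>+x. f x \<partial>lborel) = emeasure M {\<omega>\<in>space M. P \<omega>}"
    and above: "(\<integral>\<^sup>+x\<in>{a<..}. f x \<partial>lborel) = emeasure M {\<omega>\<in>space M. a < X \<omega> \<and> P \<omega>}"
  shows "(\<integral>\<^sup>+x\<in>{..a}. f x \<partial>lborel) = emeasure M {\<omega>\<in>space M. X \<omega> \<le> a \<and> P \<omega>}"
proof -
  interpret finite_measure M by fact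
  have "(\<integral>\<^sup>+x\<in>{..a}. f x \<partial>lborel) + (\<integral>\<^sup>+x\<in>{a<..}. f x \<partial>lborel)
      = (\<integral>\<^sup>+x. f x \<partial>lborel)"
    by (subst nn_integral_add[symmetric]) (auto intro!: nn_integral_cong split: split_indicator)
  also have "\<dots> = emeasure M {\<omega>\<in>space M. X \<omega> \<le> a \<and> P \<omega>}
      + emeasure M {\<omega>\<in>space M. a < X \<omega> \<and> P \<omega>}"
    unfolding total by (subst plus_emeasure) (auto intro!: arg_cong[where f="emeasure M"])
  finally show ?thesis
    unfolding above using ennreal_add_left_cancel[of "emeasure M {\<omega>\<in>space M. a < X \<omega> \<and> P \<omega>}"]
    by (simp add: add.commute)
qed

lemma set_nn_integral_eq_emeasure_of_genInv_mixture:
  fixes \<phi> c f :: "real \<Rightarrow> real" and Y :: "'a \<Rightarrow> real"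
  assumes \<phi>: "mono_on {0<..<1} \<phi>" and f_nonneg: "\<And>x. 0 \<le> f x"
    and [measurable]: "c \<in> borel_measurable borel" "f \<in> borel_measurable borel" "S \<in> sets borel"
      "Y \<in> borel_measurable M" "Measurable.pred M P"
    and mixture: "\<And>y. (\<integral>\<^sup>+x\<in>S. ennreal (genInv \<phi> (y - c x) * f x) \<partial>lborel)
      = emeasure M {\<omega>\<in>space M. P \<omega> \<and> Y \<omega> \<le> y}"
  shows "(\<integral>\<^sup>+x\<in>S. ennreal (f x) \<partial>lborel) = emeasure M {\<omega>\<in>space M. P \<omega>}"
proof -
  note [measurable] = borel_measurable_genInv[OF \<phi>]
  have "(\<integral>\<^sup>+x\<in>S. ennreal (f x) \<partial>lborel)
      = (\<integral>\<^sup>+x. (SUP n. ennreal (genInv \<phi> (real n - c x) * f x) * indicator S x) \<partial>lborel)"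
    using f_nonneg genInv_nonneg
    by (simp add: ennreal_mult SUP_mult_right_ennreal[symmetric] SUP_genInv_eq_1[OF \<phi>])
  also have "\<dots> = (SUP n. \<integral>\<^sup>+x\<in>S. ennreal (genInv \<phi> (real n - c x) * f x) \<partial>lborel)"
  proof (rule nn_integral_monotone_convergence_SUP)
    show "incseq (\<lambda>n x. ennreal (genInv \<phi> (real n - c x) * f x) * indicator S x)"
      using f_nonneg
      by (auto simp: incseq_Suc_iff le_fun_def
               intro!: mult_right_mono ennreal_leI monoD[OF genInv_mono[OF \<phi>]])
  qed simp
  also have "\<dots> = (SUP n. emeasure M {\<omega>\<in>space M. P \<omega> \<and> Y \<omega> \<le> real n})"
    by (simp add: mixture)
  also have "\<dots> = emeasure M (\<Union>n. {\<omega>\<in>space M. P \<omega> \<and> Y \<omega> \<le> real n})"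
    by (rule SUP_emeasure_incseq) (auto simp: incseq_def intro: order_trans)
  also have "(\<Union>n. {\<omega>\<in>space M. P \<omega> \<and> Y \<omega> \<le> real n}) = {\<omega>\<in>space M. P \<omega>}"
    using real_arch_simple by blast
  finally show ?thesis .
qed

lemma genInv_mixture_nonpos_eq_atom:
  fixes M :: "'a measure" and X Y :: "'a \<Rightarrow> real" and F :: "real \<Rightarrow> real \<Rightarrow> real"
    and f h c \<phi> :: "real \<Rightarrow> real"
  assumes fin: "finite_measure M"
    and [measurable]: "X \<in> borel_measurable M" "Y \<in> borel_measurable M"
      "c \<in> borel_measurable borel" "h \<in> borel_measurable borel"
    and X_nonneg: "\<And>\<omega>. \<omega> \<in> space M \<Longrightarrow> 0 \<le> X \<omega>"
    and F_cdf: "\<And>x. 0 < x \<Longrightarrow> is_cdf (F x)"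
    and F_quantile: "\<And>x e. 0 < x \<Longrightarrow> e \<in> {0<..<1} \<Longrightarrow> quantile (F x) e = c x + \<phi> e"
    and F_cond: "\<And>y. emeasure M {\<omega>\<in>space M. X \<omega> \<in> {0<..} \<and> Y \<omega> \<le> y}
      = (\<integral>\<^sup>+x\<in>{0<..}. ennreal (F x y * f x) \<partial>lborel)"
    and \<phi>: "mono_on {0<..<1} \<phi>"
    and h_nonneg: "\<And>x. 0 \<le> h x" and h_f: "\<And>x. 0 < x \<Longrightarrow> h x = f x"
    and total: "\<And>y. (\<integral>\<^sup>+x. ennreal (genInv \<phi> (y - c x) * h x) \<partial>lborel)
      = emeasure M {\<omega>\<in>space M. Y \<omega> \<le> y}"
  shows "(\<integral>\<^sup>+x\<in>{..0}. ennreal (genInv \<phi> (y - c x) * h x) \<partial>lborel)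
      = emeasure M {\<omega>\<in>space M. X \<omega> = 0 \<and> Y \<omega> \<le> y}"
    and "(\<integral>\<^sup>+x\<in>{..0}. ennreal (h x) \<partial>lborel) = emeasure M {\<omega>\<in>space M. X \<omega> = 0}"
proof -
  note [measurable] = borel_measurable_genInv[OF \<phi>]
  have atom: "{\<omega>\<in>space M. X \<omega> \<le> 0 \<and> P \<omega>} = {\<omega>\<in>space M. X \<omega> = 0 \<and> P \<omega>}" for P
    using X_nonneg by force
  have "genInv \<phi> (y - c x) * h x = F x y * f x" if "0 < x" for x y
    using cdf_eq_genInv_of_quantile_shift[OF F_cdf[OF that], of "c x" \<phi> y] F_quantile[OF that] h_f[OF that]
    by simp
  then have above: "(\<integral>\<^sup>+x\<in>{0<..}. ennreal (genInv \<phi> (y - c x) * h x) \<partial>lborel)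
      = emeasure M {\<omega>\<in>space M. 0 < X \<omega> \<and> Y \<omega> \<le> y}" for y
    using F_cond[of y] by (auto intro!: nn_integral_cong split: split_indicator)
  have below: "(\<integral>\<^sup>+x\<in>{..0}. ennreal (genInv \<phi> (y - c x) * h x) \<partial>lborel)
      = emeasure M {\<omega>\<in>space M. X \<omega> \<le> 0 \<and> Y \<omega> \<le> y}" for y
    by (rule set_nn_integral_atMost_eq_emeasure_by_complement[OF fin _ _ _ total above]; measurable)
  then show "(\<integral>\<^sup>+x\<in>{..0}. ennreal (genInv \<phi> (y - c x) * h x) \<partial>lborel)
      = emeasure M {\<omega>\<in>space M. X \<omega> = 0 \<and> Y \<omega> \<le> y}"
    unfolding atom .
  have "(\<integral>\<^sup>+x\<in>{..0}. ennreal (h x) \<partial>lborel) = emeasure M {\<omega>\<in>space M. X \<omega> \<le> 0}"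
    by (rule set_nn_integral_eq_emeasure_of_genInv_mixture[OF \<phi> h_nonneg _ _ _ _ _ below]; measurable)
  then show "(\<integral>\<^sup>+x\<in>{..0}. ennreal (h x) \<partial>lborel) = emeasure M {\<omega>\<in>space M. X \<omega> = 0}"
    using atom[of "\<lambda>_. True"] by simp
qed

lemma density_indicator_atMost_eqI:
  fixes N :: "real measure" and f :: "real \<Rightarrow> real"
  assumes sets_N: "sets N = sets borel" and [measurable]: "f \<in> borel_measurable borel"
    and finite: "emeasure N {..a} \<noteq> \<infinity>"
    and cdf: "\<And>x. x \<le> a \<Longrightarrow> emeasure N {..x} = (\<integral>\<^sup>+t\<in>{..x}. ennreal (f t) \<partial>lborel)"
  shows "density N (indicator {..a}) = density lborel (\<lambda>t. ennreal (f t) * indicator {..a} t)"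
proof (rule measure_eqI_generator_eq[where \<Omega>=UNIV and E="range (atMost :: real \<Rightarrow> real set)"
    and A="\<lambda>i. {..real i}"])
  have "sets (borel :: real measure) = sigma_sets UNIV (range atMost)"
    by (subst borel_eq_atMost) simp
  then show "sets (density N (indicator {..a})) = sigma_sets UNIV (range atMost)"
    "sets (density lborel (\<lambda>t. ennreal (f t) * indicator {..a} t)) = sigma_sets UNIV (range atMost)"
    using sets_N by simp_all
  have N_atMost: "emeasure (density N (indicator {..a})) {..x} = emeasure N {..min x a}" for x
  proof -
    have "emeasure (density N (indicator {..a})) {..x} = (\<integral>\<^sup>+t. indicator {..a} t * indicator {..x} t \<partial>N)"
      by (rule emeasure_density) (use sets_N in auto)
    also have "\<dots> = (\<integral>\<^sup>+t. indicator {..min x a} t \<partial>N)"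
      by (rule nn_integral_cong) (auto split: split_indicator)
    finally show ?thesis using sets_N by simp
  qed
  show "emeasure (density N (indicator {..a})) {..real i} \<noteq> \<infinity>" for i
    unfolding N_atMost using finite emeasure_mono[of "{..min (real i) a}" "{..a}" N] sets_N
    by (auto simp: top_unique)
  fix S assume "S \<in> range (atMost :: real \<Rightarrow> real set)"
  then obtain x where S: "S = {..x}" by auto
  show "emeasure (density N (indicator {..a})) S = emeasure (density lborel (\<lambda>t. ennreal (f t) * indicator {..a} t)) S"
    unfolding S N_atMost cdf[OF min.cobounded2]
    by (subst emeasure_density) (auto intro!: nn_integral_cong split: split_indicator)
qed (auto simp: Int_stable_def real_arch_simple)

lemma set_nn_integral_distr_atMost_eq_density:
  fixes Xs :: "'b \<Rightarrow> real" and f :: "real \<Rightarrow> real" and g :: "real \<Rightarrow> ennreal"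
  assumes "finite_measure Ms"
    and [measurable]: "Xs \<in> borel_measurable Ms"
    and f_meas[measurable]: "f \<in> borel_measurable borel" and [measurable]: "g \<in> borel_measurable borel"
    and cdf: "\<And>x. x \<le> a \<Longrightarrow>
      emeasure Ms {\<omega>\<in>space Ms. Xs \<omega> \<le> x} = (\<integral>\<^sup>+t\<in>{..x}. ennreal (f t) \<partial>lborel)"
  shows "(\<integral>\<^sup>+x\<in>{..a}. g x \<partial>distr Ms borel Xs) = (\<integral>\<^sup>+x\<in>{..a}. g x * ennreal (f x) \<partial>lborel)"
proof -
  interpret finite_measure Ms by fact
  have distr_atMost: "emeasure (distr Ms borel Xs) {..x} = emeasure Ms {\<omega>\<in>space Ms. Xs \<omega> \<le> x}" for x
    by (subst emeasure_distr) (auto intro!: arg_cong[where f="emeasure Ms"])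
  have distr_cdf: "emeasure (distr Ms borel Xs) {..x} = (\<integral>\<^sup>+t\<in>{..x}. ennreal (f t) \<partial>lborel)"
    if "x \<le> a" for x
    using cdf[OF that] by (simp add: distr_atMost)
  have "(\<integral>\<^sup>+x\<in>{..a}. g x \<partial>distr Ms borel Xs)
      = (\<integral>\<^sup>+x. g x \<partial>density (distr Ms borel Xs) (indicator {..a}))"
    by (subst nn_integral_density) (auto simp: mult.commute)
  also have "\<dots> = (\<integral>\<^sup>+x. g x \<partial>density lborel (\<lambda>t. ennreal (f t) * indicator {..a} t))"
    by (subst density_indicator_atMost_eqI[OF _ f_meas _ distr_cdf])
       (simp_all add: distr_atMost emeasure_finite)
  also have "\<dots> = (\<integral>\<^sup>+x\<in>{..a}. g x * ennreal (f x) \<partial>lborel)"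
    by (subst nn_integral_density) (auto simp: mult_ac)
  finally show ?thesis .
qed

theorem propositionB7:
  fixes M :: "'a measure" and X Y Y0 :: "'a \<Rightarrow> real"
    and fX :: "real \<Rightarrow> real"
    and Fc :: "real \<Rightarrow> real \<Rightarrow> real"
    and s sstar \<phi> h :: "real \<Rightarrow> real"
    and Ms :: "'b measure" and Xs Ys :: "'b \<Rightarrow> real"
  assumes P: "prob_space M"
    and X_rv: "X \<in> borel_measurable M" and Y_rv: "Y \<in> borel_measurable M"
    and Y0_rv: "Y0 \<in> borel_measurable M"
    and X_nonneg: "\<forall>\<omega>\<in>space M. X \<omega> \<ge> 0"
    and atom_pos: "measure M {\<omega>\<in>space M. X \<omega> = 0} > 0"
    and fX_nonneg: "\<forall>x>0. fX x \<ge> 0"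
    and density: "\<forall>A\<in>sets borel. A \<subseteq> {0<..} \<longrightarrow>
        emeasure M {\<omega>\<in>space M. X \<omega> \<in> A} = (\<integral>\<^sup>+ x\<in>A. ennreal (fX x) \<partial>lborel)"
    and Y0_int: "integrable M Y0"
    and Y_obs: "\<forall>\<omega>\<in>space M. X \<omega> = 0 \<longrightarrow> Y \<omega> = Y0 \<omega>"
    \<comment> \<open>conditional CDF of Y(0) given X = x, for x > 0 (a version of the conditional law)\<close>
    and Fc_cdf: "\<forall>x>0. is_cdf (Fc x)"
    and Fc_meas: "\<forall>y. (\<lambda>x. Fc x y) \<in> borel_measurable borel"
    and Fc_cond: "\<forall>A\<in>sets borel. \<forall>y. A \<subseteq> {0<..} \<longrightarrow>
        emeasure M {\<omega>\<in>space M. X \<omega> \<in> A \<and> Y0 \<omega> \<le> y}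
          = (\<integral>\<^sup>+ x\<in>A. ennreal (Fc x y * fX x) \<partial>lborel)"
    \<comment> \<open>Assumption A6 (i)\<close>
    and A6_i: "\<forall>x>0. \<forall>e\<in>{0<..<1}. quantile (Fc x) e = s x + \<phi> e"
    \<comment> \<open>Assumption A6 (ii)\<close>
    and A6_ii_s: "real_analytic_on s {0<..}"
    and A6_ii_ext: "real_analytic_on sstar UNIV" and A6_ii_eq: "\<forall>x>0. sstar x = s x"
    \<comment> \<open>Assumption A6 (iii)\<close>
    and A6_iii_mono: "strict_mono_on {0<..<1} \<phi>"
    and h_cont: "continuous_on UNIV h" and h_nonneg: "\<forall>x. h x \<ge> 0"
    and h_fX: "\<forall>x>0. h x = fX x"
    and A6_iii: "\<forall>y. (\<integral>\<^sup>+ x. ennreal (genInv \<phi> (y - sstar x) * h x) \<partial>lborel)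
                   = ennreal (measure M {\<omega>\<in>space M. Y0 \<omega> \<le> y})"
    \<comment> \<open>the constructed P*: law of X* and conditional law of Y*(0) given X*\<close>
    and Ps: "prob_space Ms"
    and Xs_rv: "Xs \<in> borel_measurable Ms" and Ys_rv: "Ys \<in> borel_measurable Ms"
    and Xs_cdf_neg: "\<forall>x<0. emeasure Ms {\<omega>\<in>space Ms. Xs \<omega> \<le> x}
                       = (\<integral>\<^sup>+ t\<in>{..x}. ennreal (h t) \<partial>lborel)"
    and Xs_cdf_nonneg: "\<forall>x\<ge>0. measure Ms {\<omega>\<in>space Ms. Xs \<omega> \<le> x}
                       = measure M {\<omega>\<in>space M. X \<omega> \<le> x}"
    and Ys_cond: "\<forall>A\<in>sets borel. \<forall>y.
        emeasure Ms {\<omega>\<in>space Ms. Xs \<omega> \<in> A \<and> Ys \<omega> \<le> y}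
          = (\<integral>\<^sup>+ x\<in>A. ennreal (genInv \<phi> (y - sstar x)) \<partial>(distr Ms borel Xs))"
  shows "measure Ms {\<omega>\<in>space Ms. Xs \<omega> \<le> 0} = measure M {\<omega>\<in>space M. X \<omega> = 0}
    \<and> (\<forall>y. measure Ms {\<omega>\<in>space Ms. Ys \<omega> \<le> y \<and> Xs \<omega> \<le> 0} / measure Ms {\<omega>\<in>space Ms. Xs \<omega> \<le> 0}
          = measure M {\<omega>\<in>space M. Y \<omega> \<le> y \<and> X \<omega> = 0} / measure M {\<omega>\<in>space M. X \<omega> = 0})"
proof -
  interpret M: prob_space M by (rule P)
  interpret Ms: prob_space Ms by (rule Ps)
  have \<phi>: "mono_on {0<..<1} \<phi>"
    using A6_iii_mono by (rule strict_mono_on_imp_mono_on)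
  note [measurable] = borel_measurable_genInv[OF \<phi>]
  have sstar_meas[measurable]: "sstar \<in> borel_measurable borel"
    and h_meas[measurable]: "h \<in> borel_measurable borel"
    using h_cont real_analytic_on_imp_isCont[OF A6_ii_ext]
    by (auto intro!: borel_measurable_continuous_onI continuous_at_imp_continuous_on)
  have "quantile (Fc x) e = sstar x + \<phi> e" if "0 < x" "e \<in> {0<..<1}" for x e
    using A6_i A6_ii_eq that by simp
  moreover have "emeasure M {\<omega>\<in>space M. X \<omega> \<in> {0<..} \<and> Y0 \<omega> \<le> y}
      = (\<integral>\<^sup>+x\<in>{0<..}. ennreal (Fc x y * fX x) \<partial>lborel)" for y
    using Fc_cond[rule_format, of "{0<..}" y] by simp
  moreover have "(\<integral>\<^sup>+x. ennreal (genInv \<phi> (y - sstar x) * h x) \<partial>lborel)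
      = emeasure M {\<omega>\<in>space M. Y0 \<omega> \<le> y}" for y
    using A6_iii by (simp add: M.emeasure_eq_measure)
  moreover note genInv_mixture_nonpos_eq_atom[OF M.finite_measure_axioms X_rv Y0_rv sstar_meas h_meas]
  ultimately have atom: "(\<integral>\<^sup>+x\<in>{..0}. ennreal (genInv \<phi> (y - sstar x) * h x) \<partial>lborel)
        = emeasure M {\<omega>\<in>space M. X \<omega> = 0 \<and> Y0 \<omega> \<le> y}"
    and mass: "(\<integral>\<^sup>+x\<in>{..0}. ennreal (h x) \<partial>lborel) = emeasure M {\<omega>\<in>space M. X \<omega> = 0}" for y
    using X_nonneg Fc_cdf \<phi> h_nonneg h_fX by blast+
  have "{\<omega>\<in>space M. X \<omega> \<le> 0} = {\<omega>\<in>space M. X \<omega> = 0}"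
    using X_nonneg by force
  then have Xs_atom: "measure Ms {\<omega>\<in>space Ms. Xs \<omega> \<le> 0} = measure M {\<omega>\<in>space M. X \<omega> = 0}"
    using Xs_cdf_nonneg by simp
  have Xs_cdf: "emeasure Ms {\<omega>\<in>space Ms. Xs \<omega> \<le> x} = (\<integral>\<^sup>+t\<in>{..x}. ennreal (h t) \<partial>lborel)"
    if "x \<le> 0" for x
    using that Xs_cdf_neg Xs_atom mass
    by (cases "x = 0") (auto simp: M.emeasure_eq_measure Ms.emeasure_eq_measure)
  have "emeasure Ms {\<omega>\<in>space Ms. Ys \<omega> \<le> y \<and> Xs \<omega> \<le> 0}
      = (\<integral>\<^sup>+x\<in>{..0}. ennreal (genInv \<phi> (y - sstar x)) \<partial>distr Ms borel Xs)" for y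
    using Ys_cond[rule_format, of "{..0}" y] by (simp add: conj_commute)
  also have "\<dots> y = (\<integral>\<^sup>+x\<in>{..0}. ennreal (genInv \<phi> (y - sstar x) * h x) \<partial>lborel)" for y
    using set_nn_integral_distr_atMost_eq_density[OF Ms.finite_measure_axioms Xs_rv h_meas _ Xs_cdf]
      h_nonneg genInv_nonneg by (simp add: ennreal_mult)
  also have "\<dots> y = emeasure M {\<omega>\<in>space M. Y \<omega> \<le> y \<and> X \<omega> = 0}" for y
    unfolding atom using Y_obs by (auto intro!: arg_cong[where f="emeasure M"])
  finally show ?thesis
    using Xs_atom by (simp add: M.emeasure_eq_measure Ms.emeasure_eq_measure)
qed

end
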